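(* Let $G$, $\delta$, $l$ satisfy: $G$ torsion-free, $l:G\to\mathbb{Z}^n$ a $\delta$-regular $\delta$-hyperbolic length function with (A) $ht(\delta)=1$, (B) for all $g\in G$ and nonzero integers $m$, $l(g^m)<l(g)$ implies $ht(l(g)-l(g^m))=1$, (C) $l(g)>0$ for $g\ne1$. Then for every $k\ge1$ the length function $l_k:G\to\mathbb{Z}^{n-k}$ is $0$-hyperbolic, $0$-regular, and satisfies $l_k(g^2)\ge l_k(g)$ for all $g\in G$.
   Context: $\mathbb{Z}^m$ (and $\mathbb{Q}^m$) carries the right lexicographic order: $(a_1,\dots,a_m)<(b_1,\dots,b_m)$ iff $a_j<b_j$ for the largest $j$ with $a_j\ne b_j$. $ht(a)$ is the largest index $k$ with $a_k\ne0$, $ht(0)=0$. A length function $L:G\to\mathbb{Z}^m$ satisfies $L(1)=0$, $L(g)\ge0$, $L(g^{-1})=L(g)$, $L(gh)\le L(g)+L(h)$; $c_L(g,h)=\tfrac12(L(g)+L(h)-L(g^{-1}h))$. $L$ is $\delta$-hyperbolic if $c_L(f,g)\ge\min\{c_L(f,h),c_L(g,h)\}-\delta$ for all $f,g,h$. $g=a\circ b$ means $g=ab$ and $L(g)=L(a)+L(b)$; $L$ is $\delta$-regular if for all $g,h$ there exist $g_c,h_c,g_d,h_d$ with $L(g_c)=L(h_c)=c_L(g,h)$, $g=g_c\circ g_d$, $h=h_c\circ h_d$, $L(g_c^{-1}h_c)\le4\delta$. For $k\ge1$, $l_k(g)=(a_{k+1},\dots,a_n)$ where $l(g)=(a_1,\dots,a_n)$.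 *)

theory Defs
  imports "HOL-Algebra.Algebra"
begin

text \<open>Vectors in Z^m / Q^m are lists of length m; entry a_j is the list element at index j-1.\<close>

definition rlex_less :: "'a::linorder list \<Rightarrow> 'a list \<Rightarrow> bool" where
  "rlex_less a b \<longleftrightarrow>
     (\<exists>j<length a. a ! j < b ! j \<and> (\<forall>i. j < i \<and> i < length a \<longrightarrow> a ! i = b ! i))"

definition rlex_le :: "'a::linorder list \<Rightarrow> 'a list \<Rightarrow> bool" where
  "rlex_le a b \<longleftrightarrow> a = b \<or> rlex_less a b"

definition rlex_min :: "'a::linorder list \<Rightarrow> 'a list \<Rightarrow> 'a list" where
  "rlex_min a b = (if rlex_le a b then a else b)"

definition vadd :: "'a::plus list \<Rightarrow> 'a list \<Rightarrow> 'a list" where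
  "vadd a b = map2 (+) a b"

definition vsub :: "'a::minus list \<Rightarrow> 'a list \<Rightarrow> 'a list" where
  "vsub a b = map2 (-) a b"

definition vzero :: "nat \<Rightarrow> 'a::zero list" where
  "vzero m = replicate m 0"

definition ht :: "'a::zero list \<Rightarrow> nat" where
  "ht a = (if \<exists>k<length a. a ! k \<noteq> 0
           then Suc (GREATEST k. k < length a \<and> a ! k \<noteq> 0) else 0)"

definition torsion_free :: "('g, 'm) monoid_scheme \<Rightarrow> bool" where
  "torsion_free G \<longleftrightarrow>
     (\<forall>g\<in>carrier G. g \<noteq> \<one>\<^bsub>G\<^esub> \<longrightarrow> (\<forall>n::nat. n > 0 \<longrightarrow> g [^]\<^bsub>G\<^esub> n \<noteq> \<one>\<^bsub>G\<^esub>))"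

definition length_function :: "('g, 'm) monoid_scheme \<Rightarrow> nat \<Rightarrow> ('g \<Rightarrow> int list) \<Rightarrow> bool" where
  "length_function G m L \<longleftrightarrow>
     (\<forall>g\<in>carrier G. length (L g) = m) \<and>
     L \<one>\<^bsub>G\<^esub> = vzero m \<and>
     (\<forall>g\<in>carrier G. rlex_le (vzero m) (L g)) \<and>
     (\<forall>g\<in>carrier G. L (inv\<^bsub>G\<^esub> g) = L g) \<and>
     (\<forall>g\<in>carrier G. \<forall>h\<in>carrier G. rlex_le (L (g \<otimes>\<^bsub>G\<^esub> h)) (vadd (L g) (L h)))"

definition gromov_prod :: "('g, 'm) monoid_scheme \<Rightarrow> ('g \<Rightarrow> int list) \<Rightarrow> 'g \<Rightarrow> 'g \<Rightarrow> rat list" where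
  "gromov_prod G L g h =
     map (\<lambda>x. of_int x / 2) (vsub (vadd (L g) (L h)) (L (inv\<^bsub>G\<^esub> g \<otimes>\<^bsub>G\<^esub> h)))"

definition hyperbolic :: "('g, 'm) monoid_scheme \<Rightarrow> ('g \<Rightarrow> int list) \<Rightarrow> int list \<Rightarrow> bool" where
  "hyperbolic G L \<delta> \<longleftrightarrow>
     (\<forall>f\<in>carrier G. \<forall>g\<in>carrier G. \<forall>h\<in>carrier G.
        rlex_le (vsub (rlex_min (gromov_prod G L f h) (gromov_prod G L g h)) (map of_int \<delta>))
                (gromov_prod G L f g))"

definition reduced_prod :: "('g, 'm) monoid_scheme \<Rightarrow> ('g \<Rightarrow> int list) \<Rightarrow> 'g \<Rightarrow> 'g \<Rightarrow> 'g \<Rightarrow> bool" where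
  "reduced_prod G L g a b \<longleftrightarrow> g = a \<otimes>\<^bsub>G\<^esub> b \<and> L g = vadd (L a) (L b)"

definition regular :: "('g, 'm) monoid_scheme \<Rightarrow> ('g \<Rightarrow> int list) \<Rightarrow> int list \<Rightarrow> bool" where
  "regular G L \<delta> \<longleftrightarrow>
     (\<forall>g\<in>carrier G. \<forall>h\<in>carrier G. \<exists>gc\<in>carrier G. \<exists>hc\<in>carrier G. \<exists>gd\<in>carrier G. \<exists>hd\<in>carrier G.
        map of_int (L gc) = gromov_prod G L g h \<and>
        map of_int (L hc) = gromov_prod G L g h \<and>
        reduced_prod G L g gc gd \<and> reduced_prod G L h hc hd \<and>
        rlex_le (L (inv\<^bsub>G\<^esub> gc \<otimes>\<^bsub>G\<^esub> hc)) (map (\<lambda>x. 4 * x) \<delta>))"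

definition trunc_len :: "nat \<Rightarrow> ('g \<Rightarrow> int list) \<Rightarrow> 'g \<Rightarrow> int list" where
  "trunc_len k L g = drop k (L g)"

end

theory Submission
  imports Defs
begin

text \<open>Dropping the first \<open>k\<close> coordinates is monotone for the right lexicographic order,
  since that order is decided by the highest differing coordinate. Hypothesis (A) says that
  \<open>\<delta>\<close> lives in the first coordinate only, so it disappears after truncation and
  \<open>\<delta>\<close>-hyperbolicity and \<open>\<delta>\<close>-regularity of \<open>l\<close> become \<open>0\<close>-hyperbolicity and
  \<open>0\<close>-regularity of \<open>l\<^sub>k\<close>. If \<open>l\<^sub>k(g\<^sup>2) < l\<^sub>k(g)\<close>, then \<open>l(g\<^sup>2) < l(g)\<close> with the difference
  nonzero in a coordinate above the first, contradicting hypothesis (B).\<close>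

lemma rlex_less_of_drop:
  assumes "length a = length b" and "rlex_less (drop k a) (drop k b)"
  shows "rlex_less a b"
proof -
  from assms(2) obtain j where j: "j < length (drop k a)" "drop k a ! j < drop k b ! j"
    and above: "\<forall>i. j < i \<and> i < length (drop k a) \<longrightarrow> drop k a ! i = drop k b ! i"
    unfolding rlex_less_def by blast
  show ?thesis unfolding rlex_less_def
  proof (intro exI[of _ "k + j"] conjI allI impI)
    show "k + j < length a" "a ! (k + j) < b ! (k + j)" using j assms(1) by simp_all
    fix i assume i: "k + j < i \<and> i < length a"
    then have "j < i - k" "i - k < length (drop k a)" by auto
    then have "drop k a ! (i - k) = drop k b ! (i - k)" using above by blast
    then show "a ! i = b ! i" using i assms(1) by simp
  qed
qed

lemma rlex_less_imp_le_drop: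
  assumes "length a = length b" and "rlex_less a b"
  shows "rlex_le (drop k a) (drop k b)"
proof -
  from assms(2) obtain j where j: "j < length a" "a ! j < b ! j"
    and above: "\<forall>i. j < i \<and> i < length a \<longrightarrow> a ! i = b ! i"
    unfolding rlex_less_def by blast
  show ?thesis
  proof (cases "k \<le> j")
    case True
    have "rlex_less (drop k a) (drop k b)" unfolding rlex_less_def
    proof (intro exI[of _ "j - k"] conjI allI impI)
      show "j - k < length (drop k a)" "drop k a ! (j - k) < drop k b ! (j - k)"
        using j True assms(1) by simp_all
      fix i assume "j - k < i \<and> i < length (drop k a)"
      then have "j < k + i" "k + i < length a" using True by auto
      then have "k + i < length a" "a ! (k + i) = b ! (k + i)" using above by blast+
      then show "drop k a ! i = drop k b ! i" using assms(1) by simp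
    qed
    then show ?thesis unfolding rlex_le_def ..
  next
    case False
    have "drop k a = drop k b"
      by (rule nth_equalityI) (use above False assms(1) in auto)
    then show ?thesis unfolding rlex_le_def ..
  qed
qed

lemma rlex_le_drop:
  assumes "length a = length b" and "rlex_le a b"
  shows "rlex_le (drop k a) (drop k b)"
  using assms rlex_less_imp_le_drop unfolding rlex_le_def by blast

lemma rlex_le_or_less:
  assumes "length a = length b"
  shows "rlex_le a b \<or> rlex_less b a"
proof (cases "a = b")
  case True
  then show ?thesis by (simp add: rlex_le_def)
next
  case False
  define P where "P = (\<lambda>j. j < length a \<and> a ! j \<noteq> b ! j)"
  define j where "j = Greatest P"
  obtain i where "P i" using False assms nth_equalityI unfolding P_def by blast
  then have Pj: "P j" unfolding j_def by (rule GreatestI_nat[of P i "length a"]) (auto simp: P_def)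
  have above: "\<forall>i. j < i \<and> i < length a \<longrightarrow> a ! i = b ! i"
  proof (intro allI impI)
    fix i assume i: "j < i \<and> i < length a"
    have "P i \<Longrightarrow> i \<le> j"
      unfolding j_def by (rule Greatest_le_nat[of P i "length a"]) (auto simp: P_def)
    then show "a ! i = b ! i" using i by (auto simp: P_def)
  qed
  from Pj have "a ! j < b ! j \<or> b ! j < a ! j" by (auto simp: P_def)
  then show ?thesis
    using Pj above assms unfolding rlex_le_def rlex_less_def P_def by (metis (full_types))
qed

lemma rlex_le_antisym:
  assumes "length a = length b" and "rlex_le a b" and "rlex_le b a"
  shows "a = b"
proof (rule ccontr)
  assume "a \<noteq> b"
  with assms obtain j1 j2 where
    j1: "j1 < length a" "a ! j1 < b ! j1" "\<forall>i. j1 < i \<and> i < length a \<longrightarrow> a ! i = b ! i"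
    and j2: "j2 < length b" "b ! j2 < a ! j2" "\<forall>i. j2 < i \<and> i < length b \<longrightarrow> b ! i = a ! i"
    unfolding rlex_le_def rlex_less_def by blast
  consider "j1 < j2" | "j2 < j1" | "j1 = j2" by linarith
  then show False
    by cases (use j1 j2 assms(1) in \<open>metis less_irrefl less_asym\<close>)+
qed

lemma drop_rlex_min:
  assumes "length a = length b"
  shows "drop k (rlex_min a b) = rlex_min (drop k a) (drop k b)"
proof (cases "rlex_le a b")
  case True
  then show ?thesis using rlex_le_drop[OF assms True] by (simp add: rlex_min_def)
next
  case False
  then have "rlex_le (drop k b) (drop k a)"
    using rlex_le_or_less rlex_less_imp_le_drop assms by metis
  moreover have "rlex_le (drop k a) (drop k b) \<Longrightarrow> drop k a = drop k b"
    using calculation rlex_le_antisym assms by (metis length_drop)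
  ultimately show ?thesis using False by (auto simp: rlex_min_def)
qed

lemma ht_eq_1_nth:
  assumes "ht a = 1" and "1 \<le> i" and "i < length a"
  shows "a ! i = 0"
proof (rule ccontr)
  assume nz: "a ! i \<noteq> 0"
  then have "(GREATEST k. k < length a \<and> a ! k \<noteq> 0) = 0"
    using assms by (auto simp: ht_def split: if_splits)
  moreover have "i \<le> (GREATEST k. k < length a \<and> a ! k \<noteq> 0)"
    by (rule Greatest_le_nat[where b = "length a"]) (use nz assms in auto)
  ultimately show False using assms(2) by simp
qed

lemma ht_eq_1_drop:
  assumes "ht a = 1" and "1 \<le> k"
  shows "drop k a = vzero (length a - k)"
  unfolding vzero_def
  by (rule nth_equalityI) (use assms ht_eq_1_nth[of a "k + _"] in auto)

lemma drop_vadd: "drop k (vadd a b) = vadd (drop k a) (drop k b)"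
  by (simp add: vadd_def drop_map drop_zip)

lemma drop_vsub: "drop k (vsub a b) = vsub (drop k a) (drop k b)"
  by (simp add: vsub_def drop_map drop_zip)

lemma gromov_prod_trunc_len:
  "gromov_prod G (trunc_len k L) g h = drop k (gromov_prod G L g h)"
  by (simp add: gromov_prod_def trunc_len_def drop_vadd drop_vsub drop_map)

lemma length_gromov_prod:
  assumes "group G" "length_function G n L" "g \<in> carrier G" "h \<in> carrier G"
  shows "length (gromov_prod G L g h) = n"
proof -
  have "inv\<^bsub>G\<^esub> g \<otimes>\<^bsub>G\<^esub> h \<in> carrier G"
    using assms by (simp add: group.inv_closed group.is_monoid monoid.m_closed)
  then show ?thesis
    using assms by (simp add: gromov_prod_def vadd_def vsub_def length_function_def)
qed

lemma length_function_trunc_len: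
  assumes "monoid G" and "length_function G n L"
  shows "length_function G (n - k) (trunc_len k L)"
  unfolding length_function_def
proof (intro conjI ballI)
  fix g h assume g: "g \<in> carrier G" and h: "h \<in> carrier G"
  have "rlex_le (L (g \<otimes>\<^bsub>G\<^esub> h)) (vadd (L g) (L h))"
    using assms g h by (simp add: length_function_def)
  then have "rlex_le (drop k (L (g \<otimes>\<^bsub>G\<^esub> h))) (drop k (vadd (L g) (L h)))"
    using assms g h
    by (intro rlex_le_drop) (simp_all add: length_function_def vadd_def monoid.m_closed)
  then show "rlex_le (trunc_len k L (g \<otimes>\<^bsub>G\<^esub> h)) (vadd (trunc_len k L g) (trunc_len k L h))"
    by (simp add: trunc_len_def drop_vadd)
next
  fix g assume g: "g \<in> carrier G"
  then have "rlex_le (drop k (vzero n)) (drop k (L g))"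
    using assms by (intro rlex_le_drop) (simp_all add: length_function_def vzero_def)
  then show "rlex_le (vzero (n - k)) (trunc_len k L g)" by (simp add: trunc_len_def vzero_def)
qed (use assms in \<open>auto simp: length_function_def trunc_len_def vzero_def\<close>)

lemma hyperbolic_trunc_len:
  assumes grp: "group G" and lf: "length_function G n L" and dlen: "length \<delta> = n"
    and hyp: "hyperbolic G L \<delta>"
  shows "hyperbolic G (trunc_len k L) (drop k \<delta>)"
  unfolding hyperbolic_def
proof (intro ballI)
  fix f g h assume f: "f \<in> carrier G" and g: "g \<in> carrier G" and h: "h \<in> carrier G"
  let ?a = "gromov_prod G L f h" and ?b = "gromov_prod G L g h" and ?c = "gromov_prod G L f g"
  have lens: "length ?a = n" "length ?b = n" "length ?c = n"
    using length_gromov_prod[OF grp lf] f g h by auto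
  then have "length (rlex_min ?a ?b) = n" by (simp add: rlex_min_def)
  then have "rlex_le (drop k (vsub (rlex_min ?a ?b) (map of_int \<delta>))) (drop k ?c)"
    using hyp f g h lens dlen by (intro rlex_le_drop) (auto simp: hyperbolic_def vsub_def)
  then show "rlex_le (vsub (rlex_min (gromov_prod G (trunc_len k L) f h)
      (gromov_prod G (trunc_len k L) g h)) (map of_int (drop k \<delta>)))
      (gromov_prod G (trunc_len k L) f g)"
    using lens by (simp add: gromov_prod_trunc_len drop_vsub drop_map drop_rlex_min)
qed

lemma regular_trunc_len:
  assumes grp: "group G" and lf: "length_function G n L" and dlen: "length \<delta> = n"
    and reg: "regular G L \<delta>"
  shows "regular G (trunc_len k L) (drop k \<delta>)"
  unfolding regular_def
proof (intro ballI)
  fix g h assume g: "g \<in> carrier G" and h: "h \<in> carrier G"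
  from reg g h obtain gc hc gd hd where
    c: "gc \<in> carrier G" "hc \<in> carrier G" "gd \<in> carrier G" "hd \<in> carrier G"
    and eq_g: "map of_int (L gc) = gromov_prod G L g h"
    and eq_h: "map of_int (L hc) = gromov_prod G L g h"
    and red_g: "reduced_prod G L g gc gd" and red_h: "reduced_prod G L h hc hd"
    and close: "rlex_le (L (inv\<^bsub>G\<^esub> gc \<otimes>\<^bsub>G\<^esub> hc)) (map (\<lambda>x. 4 * x) \<delta>)"
    unfolding regular_def by blast
  have "inv\<^bsub>G\<^esub> gc \<otimes>\<^bsub>G\<^esub> hc \<in> carrier G"
    using grp c by (simp add: group.inv_closed monoid.m_closed group.is_monoid)
  then have "rlex_le (drop k (L (inv\<^bsub>G\<^esub> gc \<otimes>\<^bsub>G\<^esub> hc))) (drop k (map (\<lambda>x. 4 * x) \<delta>))"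
    using lf dlen close by (intro rlex_le_drop) (simp_all add: length_function_def)
  moreover have "map of_int (trunc_len k L gc) = gromov_prod G (trunc_len k L) g h"
    "map of_int (trunc_len k L hc) = gromov_prod G (trunc_len k L) g h"
    using eq_g eq_h by (simp_all add: gromov_prod_trunc_len trunc_len_def drop_map[symmetric])
  moreover have "reduced_prod G (trunc_len k L) g gc gd" "reduced_prod G (trunc_len k L) h hc hd"
    using red_g red_h unfolding reduced_prod_def trunc_len_def by (metis drop_vadd)+
  ultimately show "\<exists>gc\<in>carrier G. \<exists>hc\<in>carrier G. \<exists>gd\<in>carrier G. \<exists>hd\<in>carrier G.
      map of_int (trunc_len k L gc) = gromov_prod G (trunc_len k L) g h \<and>
      map of_int (trunc_len k L hc) = gromov_prod G (trunc_len k L) g h \<and>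
      reduced_prod G (trunc_len k L) g gc gd \<and> reduced_prod G (trunc_len k L) h hc hd \<and>
      rlex_le (trunc_len k L (inv\<^bsub>G\<^esub> gc \<otimes>\<^bsub>G\<^esub> hc)) (map (\<lambda>x. 4 * x) (drop k \<delta>))"
    using c by (auto simp: trunc_len_def drop_map)
qed

lemma trunc_len_le_trunc_len_int_pow:
  assumes grp: "group G" and lf: "length_function G n L" and k: "1 \<le> k"
    and g: "g \<in> carrier G"
    and B: "rlex_less (L (g [^]\<^bsub>G\<^esub> m)) (L g) \<Longrightarrow> ht (vsub (L g) (L (g [^]\<^bsub>G\<^esub> (m::int)))) = 1"
  shows "rlex_le (trunc_len k L g) (trunc_len k L (g [^]\<^bsub>G\<^esub> m))"
proof (rule ccontr)
  assume "\<not> ?thesis"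
  have lens: "length (L g) = n" "length (L (g [^]\<^bsub>G\<^esub> m)) = n"
    using lf g grp by (simp_all add: length_function_def group.int_pow_closed)
  with \<open>\<not> ?thesis\<close> have lt: "rlex_less (drop k (L (g [^]\<^bsub>G\<^esub> m))) (drop k (L g))"
    using rlex_le_or_less[of "drop k (L g)" "drop k (L (g [^]\<^bsub>G\<^esub> m))"]
    by (simp add: trunc_len_def)
  then have "ht (vsub (L g) (L (g [^]\<^bsub>G\<^esub> m))) = 1"
    using B rlex_less_of_drop lens by metis
  moreover from lt obtain j where j: "j < n - k"
    "drop k (L (g [^]\<^bsub>G\<^esub> m)) ! j < drop k (L g) ! j"
    unfolding rlex_less_def using lens by auto
  ultimately have "vsub (L g) (L (g [^]\<^bsub>G\<^esub> m)) ! (k + j) = 0"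
    using k lens by (intro ht_eq_1_nth) (simp_all add: vsub_def)
  then show False using j lens by (simp add: vsub_def)
qed

theorem lemma3p3:
  fixes G :: "('g, 'm) monoid_scheme" and l :: "'g \<Rightarrow> int list"
    and n :: nat and \<delta> :: "int list"
  assumes grp: "group G"
    and tf: "torsion_free G"
    and lf: "length_function G n l"
    and dlen: "length \<delta> = n"
    and hyp: "hyperbolic G l \<delta>"
    and reg: "regular G l \<delta>"
    and A: "ht \<delta> = 1"
    and B: "\<And>g m. g \<in> carrier G \<Longrightarrow> (m::int) \<noteq> 0 \<Longrightarrow>
              rlex_less (l (g [^]\<^bsub>G\<^esub> m)) (l g) \<Longrightarrow> ht (vsub (l g) (l (g [^]\<^bsub>G\<^esub> m))) = 1"
    and C: "\<And>g. g \<in> carrier G \<Longrightarrow> g \<noteq> \<one>\<^bsub>G\<^esub> \<Longrightarrow> rlex_less (vzero n) (l g)"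
  shows "\<forall>k\<ge>1.
           length_function G (n - k) (trunc_len k l) \<and>
           hyperbolic G (trunc_len k l) (vzero (n - k)) \<and>
           regular G (trunc_len k l) (vzero (n - k)) \<and>
           (\<forall>g\<in>carrier G. rlex_le (trunc_len k l g) (trunc_len k l (g \<otimes>\<^bsub>G\<^esub> g)))"
proof (intro allI impI conjI ballI)
  fix k :: nat assume k: "1 \<le> k"
  have \<delta>_drop: "drop k \<delta> = vzero (n - k)" using ht_eq_1_drop[OF A k] dlen by simp
  show "length_function G (n - k) (trunc_len k l)"
    using group.is_monoid[OF grp] lf by (rule length_function_trunc_len)
  show "hyperbolic G (trunc_len k l) (vzero (n - k))"
    using hyperbolic_trunc_len[OF grp lf dlen hyp] \<delta>_drop by metis
  show "regular G (trunc_len k l) (vzero (n - k))"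
    using regular_trunc_len[OF grp lf dlen reg] \<delta>_drop by metis
  fix g assume g: "g \<in> carrier G"
  have "g [^]\<^bsub>G\<^esub> (2::int) = g \<otimes>\<^bsub>G\<^esub> g"
    using g int_pow_int[where G = G and x = g and n = 2] grp
    by (simp add: numeral_2_eq_2 group.is_monoid monoid.nat_pow_Suc monoid.nat_pow_0 monoid.l_one)
  then show "rlex_le (trunc_len k l g) (trunc_len k l (g \<otimes>\<^bsub>G\<^esub> g))"
    using trunc_len_le_trunc_len_int_pow[OF grp lf k g, of 2] B[OF g, of 2] by simp
qed

end
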